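(* There exist numbers $\lambda_0>1$ and $C>0$, depending only on $\xi$, $d$ and $h$, such that for all $\lambda\ge\lambda_0$ and all $u\in H_0^{2,h}(\Omega_h)$ the following Carleman estimate holds: $$B_h(u,\lambda)\ge C\sum_{j,s}h^2\int_{-\xi}^{d}|u_{zz}(x_j,y_s,z)|^2\varphi_\lambda(z)\,dz+C\lambda\sum_{j,s}h^2\int_{-\xi}^{d}|u_z(x_j,y_s,z)|^2\varphi_\lambda(z)\,dz+C\lambda^3\sum_{j,s}h^2\int_{-\xi}^{d}|u(x_j,y_s,z)|^2\varphi_\lambda(z)\,dz,$$ where $$B_h(u,\lambda)=\sum_{j,s}h^2\int_{-\xi}^{d}|\Delta^h u(x_j,y_s,z)|^2\varphi_\lambda(z)\,dz .$$
   Context: Let $b,\xi,d>0$, $\Omega=\{(x,y,z):|x|<b,|y|<b,\,-\xi<z<d\}$, and $\Gamma=\{(x,y,z):|x|<b,|y|<b,\,z=-\xi\}$. Fix a grid step $h>0$ and a uniform grid $\{(x_j,y_s)\}_{j,s=1}^{N_h}\subset[-b,b]^2$ with step $h$. Set $\Omega_h=\{(x_j,y_s,z):1\le j,s\le N_h,\ z\in(-\xi,d)\}$. A semidiscrete function is a family $\{f(x_j,y_s,z)\}_{j,s=1}^{N_h}$ of functions of $z\in(-\xi,d)$. Complex valued functions are identified with pairs of real valued functions (real and imaginary parts). A grid point $(x_j,y_s)$ is interior if $|x_j|<b,|y_s|<b$; at interior grid points define $u^h_{xx}(x_j,y_s,z)=\big(u(x_j-h,y_s,z)-2u(x_j,y_s,z)+u(x_j+h,y_s,z)\big)/h^2$,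 analogously $u^h_{yy}$, and $\Delta^h u=u_{zz}+u^h_{xx}+u^h_{yy}$. Difference operators are evaluated only at interior grid points, and sums $\sum_{j,s}$ run over the grid points at which the summand is defined. The space $H^{2,h}(\Omega_h)$ consists of semidiscrete complex valued functions with finite norm $\|f\|^2_{H^{2,h}(\Omega_h)}=\sum_{j,s=1}^{N_h}\sum_{r=0}^{2}h^2\int_{-\xi}^{d}|\partial_z^r f(x_j,y_s,z)|^2dz$. The subspace $H_0^{2,h}(\Omega_h)$ consists of $f\in H^{2,h}(\Omega_h)$ with $f|_{\partial\Omega}=0$ and $f_z|_\Gamma=0$, meaning: $f(x_j,y_s,z)=0$ for all $z$ whenever $(x_j,y_s)$ lies on the boundary of $[-b,b]^2$, $f(x_j,y_s,-\xi)=f(x_j,y_s,d)=0$ and $f_z(x_j,y_s,-\xi)=0$ for all $j,s$. The Carleman weight function is $\varphi_\lambda(z)=e^{-2\lambda z}$. *)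

theory Defs
  imports "HOL-Analysis.Analysis"
begin

text \<open>One-dimensional Sobolev space H^2(a,b), complex valued, via its standard
  characterisation: f (continuous representative) is the integral of f1, f1 is the
  integral of f2, and f2 is square integrable on (a,b).  f1, f2 are the (weak)
  derivatives f_z, f_zz.\<close>
definition H2_on :: "real \<Rightarrow> real \<Rightarrow> (real \<Rightarrow> complex) \<Rightarrow> (real \<Rightarrow> complex) \<Rightarrow> (real \<Rightarrow> complex) \<Rightarrow> bool" where
  "H2_on a b f f1 f2 \<longleftrightarrow>
     f2 measurable_on {a..b} \<and> (\<lambda>z. (cmod (f2 z))\<^sup>2) integrable_on {a..b} \<and>
     (\<forall>z\<in>{a..b}. (f2 has_integral (f1 z - f1 a)) {a..z} \<and> (f1 has_integral (f z - f a)) {a..z})"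

text \<open>Grid indices j,s range over {1..N}; x_j = -b + (j-1) h, y_s = -b + (s-1) h,
  with (N-1) h = 2b. Boundary grid points: j or s equal to 1 or N.\<close>
definition grid_boundary :: "nat \<Rightarrow> nat \<Rightarrow> nat \<Rightarrow> bool" where
  "grid_boundary N j s \<longleftrightarrow> j = 1 \<or> j = N \<or> s = 1 \<or> s = N"

definition grid_interior :: "nat \<Rightarrow> nat \<Rightarrow> nat \<Rightarrow> bool" where
  "grid_interior N j s \<longleftrightarrow> 2 \<le> j \<and> j + 1 \<le> N \<and> 2 \<le> s \<and> s + 1 \<le> N"

definition lap_h :: "real \<Rightarrow> (nat \<Rightarrow> nat \<Rightarrow> real \<Rightarrow> complex) \<Rightarrow> (nat \<Rightarrow> nat \<Rightarrow> real \<Rightarrow> complex)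
    \<Rightarrow> nat \<Rightarrow> nat \<Rightarrow> real \<Rightarrow> complex" where
  "lap_h h u uzz j s z =
     uzz j s z
     + (u (j - 1) s z - 2 * u j s z + u (j + 1) s z) / of_real (h\<^sup>2)
     + (u j (s - 1) z - 2 * u j s z + u j (s + 1) z) / of_real (h\<^sup>2)"

definition in_H0_2h :: "real \<Rightarrow> real \<Rightarrow> nat \<Rightarrow> (nat \<Rightarrow> nat \<Rightarrow> real \<Rightarrow> complex)
    \<Rightarrow> (nat \<Rightarrow> nat \<Rightarrow> real \<Rightarrow> complex) \<Rightarrow> (nat \<Rightarrow> nat \<Rightarrow> real \<Rightarrow> complex) \<Rightarrow> bool" where
  "in_H0_2h \<xi> d N u uz uzz \<longleftrightarrow>
     (\<forall>j\<in>{1..N}. \<forall>s\<in>{1..N}.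
        H2_on (-\<xi>) d (u j s) (uz j s) (uzz j s) \<and>
        u j s (-\<xi>) = 0 \<and> u j s d = 0 \<and> uz j s (-\<xi>) = 0 \<and>
        (grid_boundary N j s \<longrightarrow> (\<forall>z\<in>{-\<xi>..d}. u j s z = 0)))"

definition carleman_weight :: "real \<Rightarrow> real \<Rightarrow> real" where
  "carleman_weight lam z = exp (-2 * lam * z)"

definition wsum :: "real \<Rightarrow> real \<Rightarrow> real \<Rightarrow> nat \<Rightarrow> (nat \<Rightarrow> nat \<Rightarrow> bool) \<Rightarrow> real
    \<Rightarrow> (nat \<Rightarrow> nat \<Rightarrow> real \<Rightarrow> complex) \<Rightarrow> real" where
  "wsum \<xi> d h N P lam f =
     (\<Sum>j\<in>{1..N}. \<Sum>s\<in>{1..N}. if P j s then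
        h\<^sup>2 * integral {-\<xi>..d} (\<lambda>z. (cmod (f j s z))\<^sup>2 * carleman_weight lam z) else 0)"

definition B_h :: "real \<Rightarrow> real \<Rightarrow> real \<Rightarrow> nat \<Rightarrow> real
    \<Rightarrow> (nat \<Rightarrow> nat \<Rightarrow> real \<Rightarrow> complex) \<Rightarrow> (nat \<Rightarrow> nat \<Rightarrow> real \<Rightarrow> complex) \<Rightarrow> real" where
  "B_h \<xi> d h N lam u uzz = wsum \<xi> d h N (grid_interior N) lam (lap_h h u uzz)"

end

theory Submission
  imports Defs
begin

text \<open>Fix a grid point and let \<open>f\<close> be the profile \<open>z \<mapsto> u(x\<^sub>j, y\<^sub>s, z)\<close> on \<open>[-\<xi>, d]\<close>, so that
  \<open>f(-\<xi>) = f'(-\<xi>) = 0\<close>; write \<open>\<phi> = \<phi>\<^sub>\<lambda>\<close>. Integrating the derivative of \<open>\<lambda> |f|\<^sup>2 \<phi>\<close> gives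
  \<open>\<lambda>\<^sup>2 \<integral> |f|\<^sup>2 \<phi> \<le> \<integral> |f'|\<^sup>2 \<phi>\<close>, and the Cauchy-Schwarz inequality against \<open>1 / \<phi>\<close> gives
  \<open>\<lambda> \<integral> |f'|\<^sup>2 \<phi> \<le> (d + \<xi>) / 2 \<integral> |f''|\<^sup>2 \<phi>\<close>; so the \<open>\<lambda>\<close>- and \<open>\<lambda>\<^sup>3\<close>-terms are controlled by the
  \<open>u\<^sub>z\<^sub>z\<close>-term. At boundary grid points \<open>u = 0\<close>, hence \<open>u\<^sub>z\<^sub>z = 0\<close> almost everywhere, while at interior
  points \<open>|\<Delta>\<^sup>h u|\<^sup>2 \<ge> |u\<^sub>z\<^sub>z|\<^sup>2 / 2 - |u\<^sup>h\<^sub>x\<^sub>x + u\<^sup>h\<^sub>y\<^sub>y|\<^sup>2\<close>. Summing over the grid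
  (with weights \<open>h\<^sup>2\<close>) gives \<open>B\<^sub>h \<ge> \<Sum> |u\<^sub>z\<^sub>z|\<^sup>2 \<phi> / 2 - 64 / h\<^sup>4 \<Sum> |u|\<^sup>2 \<phi>\<close>, and the negative term is
  absorbed by the \<open>\<lambda>\<^sup>3\<close>-term once \<open>\<lambda>\<^sup>3 \<ge> 128 (d + \<xi>) / h\<^sup>4\<close>.\<close>

section \<open>Functions with vanishing indefinite integrals\<close>

lemma AE_eq_0_if_set_integrals_Ioi_eq_0:
  fixes g :: "real \<Rightarrow> real"
  assumes g: "integrable lborel g" and zero: "\<And>x. (LINT t:{x<..}|lborel. g t) = 0"
  shows "AE t in lborel. g t = 0"
proof -
  txt \<open>The positive and negative parts of \<open>g\<close> are densities of two measures that agree on all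
    half-lines, hence coincide.\<close>
  define P where "P t = max (g t) 0" for t
  define Q where "Q t = max (- g t) 0" for t
  have "g \<in> borel_measurable borel" using borel_measurable_integrable[OF g] by simp
  then have [measurable]: "P \<in> borel_measurable borel" "Q \<in> borel_measurable borel"
    unfolding P_def Q_def by measurable
  have PQ: "integrable lborel P" "integrable lborel Q"
    unfolding P_def Q_def using g by auto
  have nonneg: "0 \<le> P t" "0 \<le> Q t" for t by (simp_all add: P_def Q_def)
  have Ioi_integrable: "set_integrable lborel {x<..} F" if "integrable lborel F" for F :: "real \<Rightarrow> real" and x
    unfolding set_integrable_def by (rule integrable_mult_indicator[OF _ that]) (simp add: greaterThan_borel)
  have emeasure_density_Ioi:
    "emeasure (density lborel (\<lambda>t. ennreal (F t))) {x<..} = ennreal (LINT t:{x<..}|lborel. F t)"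
    if F: "integrable lborel F" "\<And>t. 0 \<le> F t" for F :: "real \<Rightarrow> real" and x
  proof -
    have "emeasure (density lborel (\<lambda>t. ennreal (F t))) {x<..}
        = (\<integral>\<^sup>+t. ennreal (indicator {x<..} t *\<^sub>R F t) \<partial>lborel)"
      using F by (subst emeasure_density) (auto intro!: nn_integral_cong simp: indicator_def greaterThan_borel)
    also have "\<dots> = ennreal (LINT t:{x<..}|lborel. F t)"
      using Ioi_integrable[OF F(1)] F(2) unfolding set_lebesgue_integral_def set_integrable_def
      by (intro nn_integral_eq_integral) auto
    finally show ?thesis .
  qed
  have "set_integrable lborel {x<..} P" "set_integrable lborel {x<..} Q" for x
    using Ioi_integrable PQ by auto
  moreover have "g t = P t - Q t" for t by (simp add: P_def Q_def max_def)
  ultimately have "(LINT t:{x<..}|lborel. P t) = (LINT t:{x<..}|lborel. Q t)" for x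
    using zero[of x] by simp
  then have "density lborel (\<lambda>t. ennreal (P t)) = density lborel (\<lambda>t. ennreal (Q t))"
    by (intro measure_eqI_lessThan) (simp_all add: emeasure_density_Ioi PQ nonneg)
  then have "AE t in lborel. ennreal (P t) = ennreal (Q t)"
    by (intro sigma_finite_measure.density_unique[OF sigma_finite_lborel]) auto
  then show ?thesis
    by eventually_elim (auto simp: P_def Q_def max_def split: if_splits)
qed

lemma integral_Int_Ioi_eq_0:
  fixes g :: "real \<Rightarrow> 'a::euclidean_space"
  assumes g: "g integrable_on {a..b}" and zero: "\<And>z. z \<in> {a..b} \<Longrightarrow> integral {a..z} g = 0"
  shows "integral ({a..b} \<inter> {x<..}) g = 0"
proof (cases "a \<le> x \<and> x < b")
  case True
  have "{a..b} \<inter> {x<..} = {x<..b}" using True by auto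
  moreover have "integral {x<..b} g = integral {x..b} g"
    by (rule integral_spike_set[OF empty_imp_negligible negligible_subset[OF negligible_sing[of x]]]) auto
  ultimately have "integral ({a..b} \<inter> {x<..}) g = integral {x..b} g" by simp
  also have "\<dots> = integral {a..b} g - integral {a..x} g"
    using Henstock_Kurzweil_Integration.integral_combine[of a x b g] True g
    by (metis add_diff_cancel_left' less_imp_le)
  finally show ?thesis using True zero by simp
next
  case outside: False
  show ?thesis
  proof (cases "x < a")
    case True
    then have "{a..b} \<inter> {x<..} = {a..b}" by auto
    then show ?thesis using zero[of b] by (cases "a \<le> b") simp_all
  next
    case False
    then have "{a..b} \<inter> {x<..} = {}" using outside by auto
    then show ?thesis by simp
  qed
qed

lemma AE_lebesgue_eq_0_if_integrals_Ioi_eq_0: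
  fixes G :: "real \<Rightarrow> real"
  assumes G: "integrable lebesgue G" and zero: "\<And>x. integral {x<..} G = 0"
  shows "AE t in lebesgue. G t = 0"
proof -
  obtain G' where G': "G' \<in> borel_measurable lborel" and "AE x in lborel. G x = G' x"
    using completion_ex_borel_measurable_real G by blast
  then have GG': "AE x in lebesgue. G x = G' x" by (simp add: AE_completion_iff)
  have "integrable lebesgue G'"
    by (rule integrable_cong_AE_imp[OF G measurable_completion[OF G'] GG'])
  then have int: "integrable lborel G'" using integrable_completion[OF G'] by simp
  have "(LINT t:{x<..}|lborel. G' t) = 0" for x
  proof -
    have "(LINT t:{x<..}|lborel. G' t) = (LINT t:{x<..}|lebesgue. G' t)"
      unfolding set_lebesgue_integral_def using G'
      by (intro integral_completion[symmetric]) (auto simp: greaterThan_borel)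
    also have "\<dots> = (LINT t:{x<..}|lebesgue. G t)"
      unfolding set_lebesgue_integral_def
    proof (intro integral_cong_AE)
      have "G \<in> borel_measurable lebesgue" "G' \<in> borel_measurable lebesgue"
        using G measurable_completion[OF G'] by auto
      then show "(\<lambda>t. indicator {x<..} t *\<^sub>R G' t) \<in> borel_measurable lebesgue"
        "(\<lambda>t. indicator {x<..} t *\<^sub>R G t) \<in> borel_measurable lebesgue"
        by (auto intro!: borel_measurable_times borel_measurable_indicator)
      show "AE t in lebesgue. indicator {x<..} t *\<^sub>R G' t = indicator {x<..} t *\<^sub>R G t"
        using GG' by eventually_elim simp
    qed
    also have "\<dots> = integral {x<..} G"
    proof (rule set_lebesgue_integral_eq_integral(2))
      show "set_integrable lebesgue {x<..} G"
        unfolding set_integrable_def by (rule integrable_mult_indicator[OF _ G]) simp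
    qed
    finally show ?thesis
      using zero by simp
  qed
  then have "AE t in lborel. G' t = 0"
    using int by (rule AE_eq_0_if_set_integrals_Ioi_eq_0[rotated])
  then show ?thesis
    using GG' by (auto simp: AE_completion_iff elim: AE_mp)
qed

lemma negligible_if_indefinite_integrals_eq_0:
  fixes g :: "real \<Rightarrow> real"
  assumes g: "g absolutely_integrable_on {a..b}"
    and zero: "\<And>z. z \<in> {a..b} \<Longrightarrow> integral {a..z} g = 0"
  shows "negligible {x \<in> {a..b}. g x \<noteq> 0}"
proof -
  define G where "G x = (if x \<in> {a..b} then g x else 0)" for x
  have "integrable lebesgue G"
    using g absolutely_integrable_restrict_UNIV[of "{a..b}" g]
    unfolding G_def set_integrable_def by simp
  moreover have "integral {x<..} G = 0" for x
    unfolding G_def Henstock_Kurzweil_Integration.integral_restrict_Int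
    using g zero by (intro integral_Int_Ioi_eq_0) (auto simp: absolutely_integrable_on_def)
  ultimately have "AE t in lebesgue. G t = 0"
    by (rule AE_lebesgue_eq_0_if_integrals_Ioi_eq_0)
  then obtain N where N: "N \<in> null_sets lebesgue" "{t. G t \<noteq> 0} \<subseteq> N"
    by (auto simp: eventually_ae_filter)
  then have "{x \<in> {a..b}. g x \<noteq> 0} \<subseteq> N" by (auto simp: G_def)
  moreover have "negligible N" using N(1) by (simp add: negligible_iff_null_sets)
  ultimately show ?thesis by (rule negligible_subset[rotated])
qed

lemma negligible_if_indefinite_integrals_eq_0_complex:
  fixes g :: "real \<Rightarrow> complex"
  assumes g: "g absolutely_integrable_on {a..b}"
    and zero: "\<And>z. z \<in> {a..b} \<Longrightarrow> integral {a..z} g = 0"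
  shows "negligible {x \<in> {a..b}. g x \<noteq> 0}"
proof -
  have g_int: "g integrable_on {a..b}"
    using g set_lebesgue_integral_eq_integral(1) by blast
  have "negligible {x \<in> {a..b}. (L \<circ> g) x \<noteq> 0}" if L: "bounded_linear L" for L :: "complex \<Rightarrow> real"
  proof (rule negligible_if_indefinite_integrals_eq_0)
    show "(L \<circ> g) absolutely_integrable_on {a..b}"
      by (rule absolutely_integrable_linear[OF g L])
    fix z assume z: "z \<in> {a..b}"
    have "g integrable_on {a..z}"
      by (rule integrable_on_subinterval[OF g_int]) (use z in auto)
    then have "integral {a..z} (L \<circ> g) = L (integral {a..z} g)"
      by (rule integral_linear[OF _ L])
    then show "integral {a..z} (L \<circ> g) = 0"
      using zero[OF z] linear_0[OF bounded_linear.linear[OF L]] by simp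
  qed
  from this[OF bounded_linear_Re] this[OF bounded_linear_Im]
  have "negligible ({x \<in> {a..b}. Re (g x) \<noteq> 0} \<union> {x \<in> {a..b}. Im (g x) \<noteq> 0})" by simp
  then show ?thesis
    by (rule negligible_subset) (auto simp: complex_eq_iff)
qed

section \<open>The one-dimensional space \<open>H2_on\<close>\<close>

context
  fixes a d :: real and f f1 f2 :: "real \<Rightarrow> complex"
  assumes H2: "H2_on a d f f1 f2" and le: "a \<le> d"
begin

lemma H2_on_has_integral:
  assumes "z \<in> {a..d}"
  shows "(f2 has_integral (f1 z - f1 a)) {a..z}" and "(f1 has_integral (f z - f a)) {a..z}"
  using H2 assms unfolding H2_on_def by auto

lemma H2_on_second_integrable: "f2 integrable_on {a..d}"
  using has_integral_integrable[OF H2_on_has_integral(1)[of d]] le by simp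

lemma H2_on_second_measurable: "f2 \<in> borel_measurable (lebesgue_on {a..d})"
  using H2 unfolding H2_on_def by (simp add: measurable_on_iff_borel_measurable)

lemma H2_on_second_square_integrable: "(\<lambda>z. (cmod (f2 z))\<^sup>2) integrable_on {a..d}"
  using H2 unfolding H2_on_def by simp

lemma H2_on_second_absolutely_integrable: "f2 absolutely_integrable_on {a..d}"
proof (rule measurable_bounded_by_integrable_imp_absolutely_integrable)
  show "(\<lambda>z. 1 + (cmod (f2 z))\<^sup>2) integrable_on {a..d}"
    using H2_on_second_square_integrable by (intro integrable_add) auto
  show "norm (f2 z) \<le> 1 + (cmod (f2 z))\<^sup>2" for z
    using sum_squares_bound[of "cmod (f2 z)" 1] norm_ge_zero[of "f2 z"]
    unfolding mult_1_right power_one by linarith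
qed (auto simp: H2_on_second_measurable)

lemma H2_on_first_eq:
  assumes "z \<in> {a..d}"
  shows "f1 z = f1 a + integral {a..z} f2"
  using integral_unique[OF H2_on_has_integral(1)[OF assms]] by simp

lemma H2_on_first_continuous: "continuous_on {a..d} f1"
proof -
  have "continuous_on {a..d} (\<lambda>z. f1 a + integral {a..z} f2)"
    by (intro continuous_intros indefinite_integral_continuous_1 H2_on_second_integrable)
  then show ?thesis
    by (rule continuous_on_eq) (simp add: H2_on_first_eq[symmetric])
qed

lemma H2_on_has_vector_derivative:
  assumes x: "x \<in> {a..d}"
  shows "(f has_vector_derivative f1 x) (at x within {a..d})"
proof -
  have eq: "f z = f a + integral {a..z} f1" if "z \<in> {a..d}" for z
    using integral_unique[OF H2_on_has_integral(2)[OF that]] by simp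
  have "((\<lambda>z. f a + integral {a..z} f1) has_vector_derivative f1 x) (at x within {a..d})"
    using integral_has_vector_derivative[OF H2_on_first_continuous x] by (auto intro!: derivative_eq_intros)
  then show ?thesis
    by (rule has_vector_derivative_transform_within[where d=1]) (use x eq[symmetric] in auto)
qed

lemma H2_on_continuous: "continuous_on {a..d} f"
  using H2_on_has_vector_derivative has_vector_derivative_continuous
  unfolding continuous_on_eq_continuous_within by blast

end

section \<open>Weighted one-dimensional estimates\<close>

definition carleman_integral :: "real \<Rightarrow> real \<Rightarrow> real \<Rightarrow> (real \<Rightarrow> complex) \<Rightarrow> real" where
  "carleman_integral a b lam f = integral {a..b} (\<lambda>z. (cmod (f z))\<^sup>2 * carleman_weight lam z)"

lemma carleman_weight_pos: "0 < carleman_weight lam z"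
  by (simp add: carleman_weight_def)

lemma continuous_on_carleman_weight: "continuous_on S (carleman_weight lam)"
  unfolding carleman_weight_def by (intro continuous_intros)

lemma carleman_integral_nonneg: "0 \<le> carleman_integral a b lam f"
  unfolding carleman_integral_def
  by (cases "(\<lambda>z. (cmod (f z))\<^sup>2 * carleman_weight lam z) integrable_on {a..b}")
     (simp_all add: integral_nonneg carleman_weight_pos less_imp_le not_integrable_integral)

lemma square_weighted_integrable:
  fixes g :: "real \<Rightarrow> complex"
  assumes "g \<in> borel_measurable (lebesgue_on {a..b})" and "(\<lambda>z. (cmod (g z))\<^sup>2) integrable_on {a..b}"
  shows "(\<lambda>z. (cmod (g z))\<^sup>2 * carleman_weight lam z) integrable_on {a..b}"
proof -
  have "(\<lambda>z. carleman_weight lam z * (cmod (g z))\<^sup>2) absolutely_integrable_on {a..b}"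
  proof (rule absolutely_integrable_bounded_measurable_product_real)
    show "carleman_weight lam \<in> borel_measurable (lebesgue_on {a..b})"
      by (intro continuous_imp_measurable_on_sets_lebesgue continuous_on_carleman_weight) auto
    show "bounded (carleman_weight lam ` {a..b})"
      by (intro compact_imp_bounded compact_continuous_image continuous_on_carleman_weight) auto
    show "(\<lambda>z. (cmod (g z))\<^sup>2) absolutely_integrable_on {a..b}"
      using assms(2) by (rule nonnegative_absolutely_integrable_1) simp
  qed auto
  then show ?thesis
    by (simp add: mult.commute set_lebesgue_integral_eq_integral(1))
qed

lemma continuous_square_weighted_integrable:
  fixes g :: "real \<Rightarrow> complex"
  assumes "continuous_on {a..b} g"
  shows "(\<lambda>z. (cmod (g z))\<^sup>2 * carleman_weight lam z) integrable_on {a..b}"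
  by (intro integrable_continuous_real continuous_intros continuous_on_carleman_weight assms)

lemma carleman_integral_Re_Im:
  fixes g :: "real \<Rightarrow> complex"
  assumes "continuous_on {a..b} g"
  shows "carleman_integral a b lam g =
    integral {a..b} (\<lambda>z. (Re (g z))\<^sup>2 * carleman_weight lam z)
    + integral {a..b} (\<lambda>z. (Im (g z))\<^sup>2 * carleman_weight lam z)"
  unfolding carleman_integral_def cmod_power2 distrib_right
  by (intro integral_add integrable_continuous_real continuous_intros continuous_on_carleman_weight assms)

lemma carleman_integral_le_deriv_real:
  fixes p q :: "real \<Rightarrow> real"
  assumes le: "a \<le> d" and lam: "0 \<le> lam" and pa: "p a = 0"
    and der: "\<And>x. x \<in> {a..d} \<Longrightarrow> (p has_real_derivative q x) (at x within {a..d})"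
    and q: "continuous_on {a..d} q"
  shows "lam\<^sup>2 * integral {a..d} (\<lambda>x. (p x)\<^sup>2 * carleman_weight lam x)
      \<le> integral {a..d} (\<lambda>x. (q x)\<^sup>2 * carleman_weight lam x)"
proof -
  let ?\<phi> = "carleman_weight lam"
  have p: "continuous_on {a..d} p"
    unfolding continuous_on_eq_continuous_within using der DERIV_continuous by blast
  define H where "H x = lam * (p x)\<^sup>2 * ?\<phi> x" for x
  define H' where "H' x = 2 * lam * p x * q x * ?\<phi> x - 2 * lam\<^sup>2 * (p x)\<^sup>2 * ?\<phi> x" for x
  have "(H has_vector_derivative H' x) (at x within {a..d})" if "x \<in> {a..d}" for x
    unfolding H_def H'_def carleman_weight_def has_real_derivative_iff_has_vector_derivative[symmetric]
    by (auto intro!: derivative_eq_intros der[OF that] simp: power2_eq_square algebra_simps)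
  then have H': "(H' has_integral (H d - H a)) {a..d}"
    by (rule fundamental_theorem_of_calculus[OF le])
  have int_p: "(\<lambda>x. lam\<^sup>2 * ((p x)\<^sup>2 * ?\<phi> x)) integrable_on {a..d}"
    and int_q: "(\<lambda>x. (q x)\<^sup>2 * ?\<phi> x) integrable_on {a..d}"
    by (intro integrable_continuous_real continuous_intros continuous_on_carleman_weight p q)+
  have "0 \<le> H d - H a"
    using lam pa by (simp add: H_def carleman_weight_pos less_imp_le)
  also have "H d - H a = integral {a..d} H'"
    using H' by (simp add: integral_unique)
  also have "\<dots> \<le> integral {a..d} (\<lambda>x. (q x)\<^sup>2 * ?\<phi> x - lam\<^sup>2 * ((p x)\<^sup>2 * ?\<phi> x))"
  proof (rule integral_le)
    show "H' integrable_on {a..d}" using H' by blast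
    show "(\<lambda>x. (q x)\<^sup>2 * ?\<phi> x - lam\<^sup>2 * ((p x)\<^sup>2 * ?\<phi> x)) integrable_on {a..d}"
      using int_p int_q by (rule integrable_diff[rotated])
    fix x
    have "(q x)\<^sup>2 * ?\<phi> x - lam\<^sup>2 * ((p x)\<^sup>2 * ?\<phi> x) - H' x = (q x - lam * p x)\<^sup>2 * ?\<phi> x"
      by (simp add: H'_def power2_eq_square algebra_simps)
    then show "H' x \<le> (q x)\<^sup>2 * ?\<phi> x - lam\<^sup>2 * ((p x)\<^sup>2 * ?\<phi> x)"
      using carleman_weight_pos[of lam x] by (smt (verit) zero_le_power2 mult_nonneg_nonneg)
  qed
  also have "\<dots> = integral {a..d} (\<lambda>x. (q x)\<^sup>2 * ?\<phi> x) - lam\<^sup>2 * integral {a..d} (\<lambda>x. (p x)\<^sup>2 * ?\<phi> x)"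
    using integral_diff[OF int_q int_p] by simp
  finally show ?thesis by simp
qed

lemma carleman_integral_le_deriv:
  fixes f f' :: "real \<Rightarrow> complex"
  assumes le: "a \<le> d" and lam: "0 \<le> lam" and fa: "f a = 0"
    and der: "\<And>x. x \<in> {a..d} \<Longrightarrow> (f has_vector_derivative f' x) (at x within {a..d})"
    and f': "continuous_on {a..d} f'"
  shows "lam\<^sup>2 * carleman_integral a d lam f \<le> carleman_integral a d lam f'"
proof -
  have f: "continuous_on {a..d} f"
    unfolding continuous_on_eq_continuous_within using der has_vector_derivative_continuous by blast
  have "lam\<^sup>2 * integral {a..d} (\<lambda>x. (Re (f x))\<^sup>2 * carleman_weight lam x)
      \<le> integral {a..d} (\<lambda>x. (Re (f' x))\<^sup>2 * carleman_weight lam x)"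
    using le lam fa by (intro carleman_integral_le_deriv_real has_field_derivative_Re der continuous_intros f') auto
  moreover have "lam\<^sup>2 * integral {a..d} (\<lambda>x. (Im (f x))\<^sup>2 * carleman_weight lam x)
      \<le> integral {a..d} (\<lambda>x. (Im (f' x))\<^sup>2 * carleman_weight lam x)"
    using le lam fa by (intro carleman_integral_le_deriv_real has_field_derivative_Im der continuous_intros f') auto
  ultimately show ?thesis
    unfolding carleman_integral_Re_Im[OF f] carleman_integral_Re_Im[OF f'] by (simp add: distrib_left)
qed

lemma quadratic_nonneg_imp_sq_le:
  fixes A B K :: real
  assumes A: "0 \<le> A" and nonneg: "\<And>t. 0 \<le> A * t\<^sup>2 - 2 * B * t + K"
  shows "B\<^sup>2 \<le> A * K"
proof (cases "A = 0")
  case True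
  have "B = 0"
  proof (rule ccontr)
    assume "B \<noteq> 0"
    then show False
      using nonneg[of "(K + 1) / (2 * B)"] True by simp
  qed
  then show ?thesis using True by simp
next
  case False
  then have "0 < A" using A by simp
  then show ?thesis
    using nonneg[of "B / A"] by (simp add: power2_eq_square field_simps)
qed

lemma Cauchy_Schwarz_integral_weighted:
  fixes g w :: "real \<Rightarrow> real"
  assumes g: "g integrable_on S" and gw: "(\<lambda>x. (g x)\<^sup>2 * w x) integrable_on S"
    and w': "(\<lambda>x. 1 / w x) integrable_on S" and w: "\<And>x. x \<in> S \<Longrightarrow> 0 < w x"
  shows "(integral S g)\<^sup>2 \<le> integral S (\<lambda>x. (g x)\<^sup>2 * w x) * integral S (\<lambda>x. 1 / w x)"
proof (rule quadratic_nonneg_imp_sq_le)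
  show "0 \<le> integral S (\<lambda>x. (g x)\<^sup>2 * w x)"
    using gw w by (intro integral_nonneg) (simp_all add: less_imp_le)
  fix t
  have i1: "(\<lambda>x. t\<^sup>2 * ((g x)\<^sup>2 * w x)) integrable_on S" and i2: "(\<lambda>x. 2 * t * g x) integrable_on S"
    using g gw by (auto intro: integrable_on_mult_right)
  have "0 \<le> integral S (\<lambda>x. t\<^sup>2 * ((g x)\<^sup>2 * w x) - 2 * t * g x + 1 / w x)"
  proof (rule integral_nonneg)
    show "(\<lambda>x. t\<^sup>2 * ((g x)\<^sup>2 * w x) - 2 * t * g x + 1 / w x) integrable_on S"
      using i1 i2 w' by (intro integrable_add integrable_diff)
    fix x assume "x \<in> S"
    then have "t\<^sup>2 * ((g x)\<^sup>2 * w x) - 2 * t * g x + 1 / w x = (t * g x * w x - 1)\<^sup>2 / w x"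
      using w[of x] by (simp add: power2_eq_square field_simps)
    then show "0 \<le> t\<^sup>2 * ((g x)\<^sup>2 * w x) - 2 * t * g x + 1 / w x"
      using w[OF \<open>x \<in> S\<close>] by simp
  qed
  also have "\<dots> = integral S (\<lambda>x. (g x)\<^sup>2 * w x) * t\<^sup>2 - 2 * integral S g * t + integral S (\<lambda>x. 1 / w x)"
    using i1 i2 w' g gw by (simp add: integral_add integral_diff integrable_diff integral_mult_right)
  finally show "0 \<le> integral S (\<lambda>x. (g x)\<^sup>2 * w x) * t\<^sup>2 - 2 * integral S g * t + integral S (\<lambda>x. 1 / w x)" .
qed

lemma has_integral_inverse_carleman_weight:
  assumes "a \<le> t" and lam: "0 < lam"
  shows "((\<lambda>z. 1 / carleman_weight lam z) has_integral (exp (2 * lam * t) - exp (2 * lam * a)) / (2 * lam)) {a..t}"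
proof -
  have "((\<lambda>z. exp (2 * lam * z) / (2 * lam)) has_vector_derivative 1 / carleman_weight lam z) (at z within {a..t})" for z
    unfolding carleman_weight_def has_real_derivative_iff_has_vector_derivative[symmetric]
    using lam by (auto intro!: derivative_eq_intros simp: exp_minus field_simps)
  from fundamental_theorem_of_calculus[OF assms(1) this] show ?thesis
    by (simp add: diff_divide_distrib)
qed

lemma H2_on_first_weighted_le:
  assumes H2: "H2_on a d f f1 f2" and le: "a \<le> d" and lam: "0 < lam" and f1a: "f1 a = 0"
    and t: "t \<in> {a..d}"
  shows "lam * ((cmod (f1 t))\<^sup>2 * carleman_weight lam t) \<le> carleman_integral a d lam f2 / 2"
proof -
  let ?\<phi> = "carleman_weight lam"
  have sub: "{a..t} \<subseteq> {a..d}" using t by auto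
  have w_int: "(\<lambda>z. (cmod (f2 z))\<^sup>2 * ?\<phi> z) integrable_on {a..d}"
    using H2_on_second_measurable[OF H2 le] H2_on_second_square_integrable[OF H2 le]
    by (rule square_weighted_integrable)
  have f2_int: "f2 absolutely_integrable_on {a..t}"
    by (rule set_integrable_subset[OF H2_on_second_absolutely_integrable[OF H2 le] _ sub]) simp
  have inv: "((\<lambda>z. 1 / ?\<phi> z) has_integral (exp (2 * lam * t) - exp (2 * lam * a)) / (2 * lam)) {a..t}"
    using t lam by (intro has_integral_inverse_carleman_weight) auto
  have "cmod (f1 t) \<le> integral {a..t} (\<lambda>z. cmod (f2 z))"
    using H2_on_first_eq[OF H2 le t] f1a f2_int
    by (auto intro: integral_norm_bound_integral simp: absolutely_integrable_on_def)
  then have "(cmod (f1 t))\<^sup>2 \<le> (integral {a..t} (\<lambda>z. cmod (f2 z)))\<^sup>2"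
    by (intro power_mono) auto
  also have "\<dots> \<le> integral {a..t} (\<lambda>z. (cmod (f2 z))\<^sup>2 * ?\<phi> z) * integral {a..t} (\<lambda>z. 1 / ?\<phi> z)"
    using f2_int inv integrable_on_subinterval[OF w_int] t
    by (intro Cauchy_Schwarz_integral_weighted) (auto simp: absolutely_integrable_on_def carleman_weight_pos)
  also have "\<dots> \<le> carleman_integral a d lam f2 * (exp (2 * lam * t) / (2 * lam))"
  proof (rule mult_mono)
    show "integral {a..t} (\<lambda>z. (cmod (f2 z))\<^sup>2 * ?\<phi> z) \<le> carleman_integral a d lam f2"
      unfolding carleman_integral_def using integrable_on_subinterval[OF w_int] t w_int
      by (intro integral_subset_le) (auto simp: carleman_weight_pos less_imp_le)
    show "integral {a..t} (\<lambda>z. 1 / ?\<phi> z) \<le> exp (2 * lam * t) / (2 * lam)"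
      using integral_unique[OF inv] lam by (simp add: divide_right_mono)
  qed (use inv in \<open>auto intro!: integral_nonneg simp: carleman_integral_nonneg carleman_weight_pos less_imp_le\<close>)
  finally have "(cmod (f1 t))\<^sup>2 * ?\<phi> t \<le> carleman_integral a d lam f2 * (exp (2 * lam * t) / (2 * lam)) * ?\<phi> t"
    by (rule mult_right_mono) (simp_all add: carleman_weight_pos less_imp_le)
  also have "\<dots> = carleman_integral a d lam f2 / (2 * lam)"
    by (simp add: carleman_weight_def field_simps flip: exp_add)
  finally show ?thesis
    using lam by (simp add: field_simps)
qed

lemma carleman_integral_first_le_second:
  assumes H2: "H2_on a d f f1 f2" and le: "a \<le> d" and lam: "0 < lam" and f1a: "f1 a = 0"
  shows "lam * carleman_integral a d lam f1 \<le> (d - a) / 2 * carleman_integral a d lam f2"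
proof -
  have "lam * carleman_integral a d lam f1 = integral {a..d} (\<lambda>z. lam * ((cmod (f1 z))\<^sup>2 * carleman_weight lam z))"
    unfolding carleman_integral_def by simp
  also have "\<dots> \<le> integral {a..d} (\<lambda>_. carleman_integral a d lam f2 / 2)"
    using H2_on_first_weighted_le[OF assms] H2_on_first_continuous[OF H2 le]
    by (intro integral_le integrable_on_mult_right continuous_square_weighted_integrable) auto
  also have "\<dots> = (d - a) / 2 * carleman_integral a d lam f2"
    using le by simp
  finally show ?thesis .
qed

lemma carleman_integral_le_second:
  assumes H2: "H2_on a d f f1 f2" and le: "a \<le> d" and lam: "0 < lam" and fa: "f a = 0" and f1a: "f1 a = 0"
  shows "lam ^ 3 * carleman_integral a d lam f \<le> (d - a) / 2 * carleman_integral a d lam f2"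
proof -
  have "lam\<^sup>2 * carleman_integral a d lam f \<le> carleman_integral a d lam f1"
    using le lam fa H2_on_has_vector_derivative[OF H2 le] H2_on_first_continuous[OF H2 le]
    by (intro carleman_integral_le_deriv) auto
  then have "lam ^ 3 * carleman_integral a d lam f \<le> lam * carleman_integral a d lam f1"
    using lam by (simp add: power3_eq_cube power2_eq_square mult.assoc)
  also have "\<dots> \<le> (d - a) / 2 * carleman_integral a d lam f2"
    by (rule carleman_integral_first_le_second[OF assms(1-3) f1a])
  finally show ?thesis .
qed

lemma H2_on_second_negligible_if_vanishing:
  assumes H2: "H2_on a d f f1 f2" and lt: "a < d" and f0: "\<And>z. z \<in> {a..d} \<Longrightarrow> f z = 0"
  shows "negligible {z \<in> {a..d}. f2 z \<noteq> 0}"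
proof (rule negligible_if_indefinite_integrals_eq_0_complex)
  have le: "a \<le> d" using lt by simp
  have f1_0: "f1 x = 0" if x: "x \<in> {a..d}" for x
  proof -
    have "(f has_vector_derivative 0) (at x within {a..d})"
      by (rule has_vector_derivative_transform_within[OF has_vector_derivative_const zero_less_one x])
         (simp add: f0)
    with H2_on_has_vector_derivative[OF H2 le x] show ?thesis
      using vector_derivative_unique_within_closed_interval[of a d, unfolded cbox_interval, OF lt x]
      by blast
  qed
  show "f2 absolutely_integrable_on {a..d}"
    by (rule H2_on_second_absolutely_integrable[OF H2 le])
  show "integral {a..z} f2 = 0" if "z \<in> {a..d}" for z
    using H2_on_first_eq[OF H2 le that] f1_0[OF that] f1_0[of a] le by simp
qed

lemma carleman_integral_eq_0_if_negligible:
  assumes "negligible {z \<in> {a..b}. f z \<noteq> 0}"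
  shows "carleman_integral a b lam f = 0"
proof -
  have "integral {a..b} (\<lambda>z. (cmod (f z))\<^sup>2 * carleman_weight lam z) = integral {a..b} (\<lambda>_. 0 :: real)"
    by (rule integral_spike[OF assms]) auto
  then show ?thesis
    by (simp add: carleman_integral_def)
qed

section \<open>The semidiscrete Laplacian and sums over the grid\<close>

lemma five_point_norm_sq_le:
  fixes x0 x1 x2 x3 x4 :: complex
  shows "(cmod (x1 + x2 + x3 + x4 - 4 * x0))\<^sup>2
    \<le> 8 * ((cmod x1)\<^sup>2 + (cmod x2)\<^sup>2 + (cmod x3)\<^sup>2 + (cmod x4)\<^sup>2 + 4 * (cmod x0)\<^sup>2)"
proof -
  have sos: "(p + q + r + t + 4 * v)\<^sup>2 \<le> 8 * (p\<^sup>2 + q\<^sup>2 + r\<^sup>2 + t\<^sup>2 + 4 * v\<^sup>2)" for p q r t v :: real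
  proof -
    have "8 * (p\<^sup>2 + q\<^sup>2 + r\<^sup>2 + t\<^sup>2 + 4 * v\<^sup>2) - (p + q + r + t + 4 * v)\<^sup>2 =
       (p - q)\<^sup>2 + (p - r)\<^sup>2 + (p - t)\<^sup>2 + (q - r)\<^sup>2 + (q - t)\<^sup>2 + (r - t)\<^sup>2
       + 4 * ((p - v)\<^sup>2 + (q - v)\<^sup>2 + (r - v)\<^sup>2 + (t - v)\<^sup>2)"
      by (simp add: power2_eq_square algebra_simps)
    moreover have "0 \<le> (p - q)\<^sup>2 + (p - r)\<^sup>2 + (p - t)\<^sup>2 + (q - r)\<^sup>2 + (q - t)\<^sup>2 + (r - t)\<^sup>2
       + 4 * ((p - v)\<^sup>2 + (q - v)\<^sup>2 + (r - v)\<^sup>2 + (t - v)\<^sup>2)"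
      by simp
    ultimately show ?thesis by linarith
  qed
  have "cmod (x1 + x2 + x3 + x4 - 4 * x0) \<le> cmod x1 + cmod x2 + cmod x3 + cmod x4 + 4 * cmod x0"
    by (rule order_trans[OF norm_triangle_ineq4]) (auto simp: norm_mult intro!: norm_triangle_le add_mono)
  then have "(cmod (x1 + x2 + x3 + x4 - 4 * x0))\<^sup>2 \<le> (cmod x1 + cmod x2 + cmod x3 + cmod x4 + 4 * cmod x0)\<^sup>2"
    by (intro power_mono) auto
  also have "\<dots> \<le> 8 * ((cmod x1)\<^sup>2 + (cmod x2)\<^sup>2 + (cmod x3)\<^sup>2 + (cmod x4)\<^sup>2 + 4 * (cmod x0)\<^sup>2)"
    by (rule sos)
  finally show ?thesis .
qed

lemma norm_add_sq_le:
  fixes x y :: "'a::real_normed_vector"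
  shows "(norm (x + y))\<^sup>2 \<le> 2 * (norm x)\<^sup>2 + 2 * (norm y)\<^sup>2"
  using norm_triangle_ineq[of x y] sum_squares_bound[of "norm x" "norm y"]
  by (smt (verit) norm_ge_zero power2_sum power_mono)

lemma square_integrable_add:
  fixes g c :: "'a::euclidean_space \<Rightarrow> 'b::euclidean_space"
  assumes "S \<in> sets lebesgue"
    and "g \<in> borel_measurable (lebesgue_on S)" and "(\<lambda>z. (norm (g z))\<^sup>2) integrable_on S"
    and "c \<in> borel_measurable (lebesgue_on S)" and "(\<lambda>z. (norm (c z))\<^sup>2) integrable_on S"
  shows "(\<lambda>z. (norm (g z + c z))\<^sup>2) integrable_on S"
proof (rule measurable_bounded_by_integrable_imp_integrable)
  show "(\<lambda>z. (norm (g z + c z))\<^sup>2) \<in> borel_measurable (lebesgue_on S)"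
    using borel_measurable_add[OF assms(2,4)] by measurable
  show "(\<lambda>z. 2 * (norm (g z))\<^sup>2 + 2 * (norm (c z))\<^sup>2) integrable_on S"
    using assms(3,5) by (intro integrable_add integrable_on_mult_right)
qed (auto simp: norm_add_sq_le assms(1))

lemma carleman_integral_le_add:
  fixes g c :: "real \<Rightarrow> complex"
  assumes g: "g \<in> borel_measurable (lebesgue_on {a..b})" "(\<lambda>z. (cmod (g z))\<^sup>2) integrable_on {a..b}"
    and c: "continuous_on {a..b} c"
  shows "carleman_integral a b lam g
    \<le> 2 * carleman_integral a b lam (\<lambda>z. g z + c z) + 2 * carleman_integral a b lam c"
proof -
  let ?\<phi> = "carleman_weight lam"
  have c_meas: "c \<in> borel_measurable (lebesgue_on {a..b})"
    by (rule continuous_imp_measurable_on_sets_lebesgue[OF c]) auto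
  have c_sq: "(\<lambda>z. (cmod (c z))\<^sup>2) integrable_on {a..b}"
    by (intro integrable_continuous_real continuous_intros c)
  have "(\<lambda>z. (cmod (g z + c z))\<^sup>2) integrable_on {a..b}"
    by (rule square_integrable_add[OF _ g c_meas c_sq]) simp
  then have gc: "(\<lambda>z. (cmod (g z + c z))\<^sup>2 * ?\<phi> z) integrable_on {a..b}"
    by (rule square_weighted_integrable[OF borel_measurable_add[OF g(1) c_meas]])
  have "integral {a..b} (\<lambda>z. (cmod (g z))\<^sup>2 * ?\<phi> z)
      \<le> integral {a..b} (\<lambda>z. 2 * ((cmod (g z + c z))\<^sup>2 * ?\<phi> z) + 2 * ((cmod (c z))\<^sup>2 * ?\<phi> z))"
  proof (rule integral_le)
    show "(\<lambda>z. 2 * ((cmod (g z + c z))\<^sup>2 * ?\<phi> z) + 2 * ((cmod (c z))\<^sup>2 * ?\<phi> z)) integrable_on {a..b}"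
      using gc continuous_square_weighted_integrable[OF c] by (intro integrable_add integrable_on_mult_right)
    show "(\<lambda>z. (cmod (g z))\<^sup>2 * ?\<phi> z) integrable_on {a..b}"
      by (rule square_weighted_integrable[OF g])
    fix z
    have "(cmod (g z))\<^sup>2 \<le> 2 * (cmod (g z + c z))\<^sup>2 + 2 * (cmod (c z))\<^sup>2"
      using norm_add_sq_le[of "g z + c z" "- c z"] by simp
    from mult_right_mono[OF this less_imp_le[OF carleman_weight_pos]]
    show "(cmod (g z))\<^sup>2 * ?\<phi> z \<le> 2 * ((cmod (g z + c z))\<^sup>2 * ?\<phi> z) + 2 * ((cmod (c z))\<^sup>2 * ?\<phi> z)"
      by (simp add: algebra_simps)
  qed
  also have "\<dots> = 2 * carleman_integral a b lam (\<lambda>z. g z + c z) + 2 * carleman_integral a b lam c"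
    unfolding carleman_integral_def using gc continuous_square_weighted_integrable[OF c]
    by (simp add: integral_add integrable_on_mult_right)
  finally show ?thesis
    unfolding carleman_integral_def .
qed

lemma carleman_integral_five_point_le:
  fixes u0 u1 u2 u3 u4 :: "real \<Rightarrow> complex"
  assumes u: "continuous_on {a..b} u0" "continuous_on {a..b} u1" "continuous_on {a..b} u2"
    "continuous_on {a..b} u3" "continuous_on {a..b} u4"
  shows "carleman_integral a b lam (\<lambda>z. (u1 z + u2 z + u3 z + u4 z - 4 * u0 z) / of_real (h\<^sup>2))
    \<le> 8 / h ^ 4 * (carleman_integral a b lam u1 + carleman_integral a b lam u2 + carleman_integral a b lam u3
      + carleman_integral a b lam u4 + 4 * carleman_integral a b lam u0)"
proof -
  define J where "J v z = (cmod (v z))\<^sup>2 * carleman_weight lam z" for v :: "real \<Rightarrow> complex" and z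
  have J: "J v integrable_on {a..b}" if "continuous_on {a..b} v" for v
    unfolding J_def using that by (rule continuous_square_weighted_integrable)
  have "carleman_integral a b lam (\<lambda>z. (u1 z + u2 z + u3 z + u4 z - 4 * u0 z) / of_real (h\<^sup>2))
      \<le> integral {a..b} (\<lambda>z. 8 / h ^ 4 * (J u1 z + J u2 z + J u3 z + J u4 z + 4 * J u0 z))"
    unfolding carleman_integral_def
  proof (rule integral_le)
    show "(\<lambda>z. 8 / h ^ 4 * (J u1 z + J u2 z + J u3 z + J u4 z + 4 * J u0 z)) integrable_on {a..b}"
      using J u by (intro integrable_on_mult_right integrable_add) auto
    show "(\<lambda>z. (cmod ((u1 z + u2 z + u3 z + u4 z - 4 * u0 z) / of_real (h\<^sup>2)))\<^sup>2 * carleman_weight lam z)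
        integrable_on {a..b}"
      unfolding divide_inverse
      by (intro continuous_square_weighted_integrable continuous_intros u)
    fix z
    have "(cmod ((u1 z + u2 z + u3 z + u4 z - 4 * u0 z) / of_real (h\<^sup>2)))\<^sup>2
        = (cmod (u1 z + u2 z + u3 z + u4 z - 4 * u0 z))\<^sup>2 / h ^ 4"
      by (simp add: norm_divide power_divide norm_power)
    also have "\<dots> \<le> 8 / h ^ 4 * ((cmod (u1 z))\<^sup>2 + (cmod (u2 z))\<^sup>2 + (cmod (u3 z))\<^sup>2 + (cmod (u4 z))\<^sup>2
        + 4 * (cmod (u0 z))\<^sup>2)"
      using divide_right_mono[OF five_point_norm_sq_le, of "h ^ 4"] by simp
    finally show "(cmod ((u1 z + u2 z + u3 z + u4 z - 4 * u0 z) / of_real (h\<^sup>2)))\<^sup>2 * carleman_weight lam z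
        \<le> 8 / h ^ 4 * (J u1 z + J u2 z + J u3 z + J u4 z + 4 * J u0 z)"
      using mult_right_mono[OF _ less_imp_le[OF carleman_weight_pos]] unfolding J_def
      by (fastforce simp: algebra_simps)
  qed
  also have "\<dots> = 8 / h ^ 4 * (carleman_integral a b lam u1 + carleman_integral a b lam u2
      + carleman_integral a b lam u3 + carleman_integral a b lam u4 + 4 * carleman_integral a b lam u0)"
    using J[OF u(1)] J[OF u(2)] J[OF u(3)] J[OF u(4)] J[OF u(5)]
    unfolding carleman_integral_def J_def[abs_def]
    by (simp add: integral_add integrable_add integral_mult_right integrable_on_mult_right)
  finally show ?thesis .
qed

lemma lap_h_eq:
  "lap_h h u uzz j s z = uzz j s z
    + (u (j - 1) s z + u (j + 1) s z + u j (s - 1) z + u j (s + 1) z - 4 * u j s z) / of_real (h\<^sup>2)"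
  unfolding lap_h_def by (simp add: add_divide_distrib[symmetric] algebra_simps)

lemma wsum_eq_sum:
  "wsum \<xi> d h N P lam f
    = (\<Sum>(j, s) \<in> {(j, s) \<in> {1..N} \<times> {1..N}. P j s}. h\<^sup>2 * carleman_integral (-\<xi>) d lam (f j s))"
proof -
  have "{(j, s) \<in> {1..N} \<times> {1..N}. P j s} = {p \<in> {1..N} \<times> {1..N}. P (fst p) (snd p)}"
    by auto
  then show ?thesis
    unfolding wsum_def carleman_integral_def sum.cartesian_product
    by (simp add: sum.inter_filter case_prod_beta)
qed

lemma sum_comp_le_sum:
  fixes F :: "'a \<Rightarrow> real"
  assumes "finite B" and "inj_on \<sigma> A" and "\<sigma> ` A \<subseteq> B" and "\<And>x. x \<in> B \<Longrightarrow> 0 \<le> F x"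
  shows "(\<Sum>x\<in>A. F (\<sigma> x)) \<le> (\<Sum>x\<in>B. F x)"
proof -
  have "(\<Sum>x\<in>A. F (\<sigma> x)) = sum F (\<sigma> ` A)"
    using assms(2) by (simp add: sum.reindex)
  also have "\<dots> \<le> sum F B"
    using assms by (intro sum_mono2) auto
  finally show ?thesis .
qed

lemma grid_neighbour_sum_le:
  fixes F :: "nat \<Rightarrow> nat \<Rightarrow> real"
  assumes F: "\<And>j s. 0 \<le> F j s"
  shows "(\<Sum>(j, s) \<in> {(j, s). grid_interior N j s}.
      F (j - 1) s + F (j + 1) s + F j (s - 1) + F j (s + 1) + 4 * F j s)
    \<le> 8 * (\<Sum>(j, s) \<in> {1..N} \<times> {1..N}. F j s)"
proof -
  let ?I = "{(j, s). grid_interior N j s}" and ?G = "{1..N} \<times> {1..N}"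
  have shift: "(\<Sum>(j, s)\<in>?I. F (\<alpha> j) (\<beta> s)) \<le> (\<Sum>(j, s)\<in>?G. F j s)"
    if "inj_on \<alpha> {2..}" "inj_on \<beta> {2..}"
      and "\<And>j. 2 \<le> j \<Longrightarrow> j + 1 \<le> N \<Longrightarrow> \<alpha> j \<in> {1..N}"
      and "\<And>s. 2 \<le> s \<Longrightarrow> s + 1 \<le> N \<Longrightarrow> \<beta> s \<in> {1..N}" for \<alpha> \<beta>
  proof -
    have "inj_on (map_prod \<alpha> \<beta>) ?I"
      by (rule inj_on_subset[OF map_prod_inj_on[OF that(1,2)]]) (auto simp: grid_interior_def)
    moreover have "map_prod \<alpha> \<beta> ` ?I \<subseteq> ?G"
      using that(3,4) by (auto simp: grid_interior_def)
    ultimately have "(\<Sum>p\<in>?I. case_prod F (map_prod \<alpha> \<beta> p)) \<le> (\<Sum>p\<in>?G. case_prod F p)"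
      using F by (intro sum_comp_le_sum) auto
    then show ?thesis
      by (simp add: case_prod_beta map_prod_def)
  qed
  have "(\<Sum>(j, s)\<in>?I. F (j - 1) s) \<le> (\<Sum>(j, s)\<in>?G. F j s)"
    by (rule shift[of "\<lambda>j. j - 1" id, unfolded id_def]) (auto simp: inj_on_def)
  moreover have "(\<Sum>(j, s)\<in>?I. F (j + 1) s) \<le> (\<Sum>(j, s)\<in>?G. F j s)"
    by (rule shift[of "\<lambda>j. j + 1" id, unfolded id_def]) (auto simp: inj_on_def)
  moreover have "(\<Sum>(j, s)\<in>?I. F j (s - 1)) \<le> (\<Sum>(j, s)\<in>?G. F j s)"
    by (rule shift[of id "\<lambda>s. s - 1", unfolded id_def]) (auto simp: inj_on_def)
  moreover have "(\<Sum>(j, s)\<in>?I. F j (s + 1)) \<le> (\<Sum>(j, s)\<in>?G. F j s)"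
    by (rule shift[of id "\<lambda>s. s + 1", unfolded id_def]) (auto simp: inj_on_def)
  moreover have "(\<Sum>(j, s)\<in>?I. F j s) \<le> (\<Sum>(j, s)\<in>?G. F j s)"
    by (rule shift[of id id, unfolded id_def]) auto
  ultimately show ?thesis
    by (simp add: sum.distrib case_prod_beta flip: sum_distrib_left)
qed

lemma in_H0_2hD:
  assumes "in_H0_2h \<xi> d N u uz uzz" and "j \<in> {1..N}" and "s \<in> {1..N}"
  shows "H2_on (-\<xi>) d (u j s) (uz j s) (uzz j s)" and "u j s (-\<xi>) = 0" and "uz j s (-\<xi>) = 0"
    and "grid_boundary N j s \<Longrightarrow> z \<in> {-\<xi>..d} \<Longrightarrow> u j s z = 0"
  using assms unfolding in_H0_2h_def by auto

lemma wsum_nonneg: "0 \<le> wsum \<xi> d h N P lam f"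
  unfolding wsum_eq_sum by (intro sum_nonneg) (auto simp: carleman_integral_nonneg)

lemma wsum_mono_scaled:
  assumes "\<And>j s. j \<in> {1..N} \<Longrightarrow> s \<in> {1..N} \<Longrightarrow>
    c * carleman_integral (-\<xi>) d lam (f j s) \<le> c' * carleman_integral (-\<xi>) d lam (g j s)"
  shows "c * wsum \<xi> d h N P lam f \<le> c' * wsum \<xi> d h N P lam g"
  unfolding wsum_eq_sum sum_distrib_left
proof (intro sum_mono)
  fix p assume "p \<in> {(j, s) \<in> {1..N} \<times> {1..N}. P j s}"
  then obtain j s where p: "p = (j, s)" "j \<in> {1..N}" "s \<in> {1..N}" by auto
  from mult_left_mono[OF assms[OF p(2,3)] zero_le_power2[of h]]
  show "c * (case p of (j, s) \<Rightarrow> h\<^sup>2 * carleman_integral (-\<xi>) d lam (f j s))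
      \<le> c' * (case p of (j, s) \<Rightarrow> h\<^sup>2 * carleman_integral (-\<xi>) d lam (g j s))"
    by (simp add: p algebra_simps)
qed

lemma wsum_first_le_second:
  assumes "in_H0_2h \<xi> d N u uz uzz" and "-\<xi> \<le> d" and "0 < lam"
  shows "lam * wsum \<xi> d h N P lam uz \<le> (d + \<xi>) / 2 * wsum \<xi> d h N P lam uzz"
  using carleman_integral_first_le_second[OF in_H0_2hD(1)[OF assms(1)] assms(2,3) in_H0_2hD(3)[OF assms(1)]]
  by (intro wsum_mono_scaled) simp

lemma wsum_le_second:
  assumes "in_H0_2h \<xi> d N u uz uzz" and "-\<xi> \<le> d" and "0 < lam"
  shows "lam ^ 3 * wsum \<xi> d h N P lam u \<le> (d + \<xi>) / 2 * wsum \<xi> d h N P lam uzz"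
  using carleman_integral_le_second[OF in_H0_2hD(1)[OF assms(1)] assms(2,3) in_H0_2hD(2,3)[OF assms(1)]]
  by (intro wsum_mono_scaled) simp

lemma wsum_second_interior_eq:
  assumes H0: "in_H0_2h \<xi> d N u uz uzz" and lt: "-\<xi> < d"
  shows "wsum \<xi> d h N (grid_interior N) lam uzz = wsum \<xi> d h N (\<lambda>j s. True) lam uzz"
proof -
  have "carleman_integral (-\<xi>) d lam (uzz j s) = 0"
    if "j \<in> {1..N}" "s \<in> {1..N}" "\<not> grid_interior N j s" for j s
  proof (rule carleman_integral_eq_0_if_negligible)
    have "grid_boundary N j s"
      using that unfolding grid_boundary_def grid_interior_def by auto
    then show "negligible {z \<in> {-\<xi>..d}. uzz j s z \<noteq> 0}"
      using in_H0_2hD(4)[OF H0 that(1,2)]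
      by (intro H2_on_second_negligible_if_vanishing[OF in_H0_2hD(1)[OF H0 that(1,2)] lt])
  qed
  then show ?thesis
    unfolding wsum_def carleman_integral_def[symmetric] by (intro sum.cong) auto
qed

lemma carleman_integral_second_le_lap_h:
  assumes H0: "in_H0_2h \<xi> d N u uz uzz" and le: "-\<xi> \<le> d" and ij: "grid_interior N j s"
  shows "carleman_integral (-\<xi>) d lam (uzz j s) \<le> 2 * carleman_integral (-\<xi>) d lam (lap_h h u uzz j s)
    + 16 / h ^ 4 * (carleman_integral (-\<xi>) d lam (u (j - 1) s) + carleman_integral (-\<xi>) d lam (u (j + 1) s)
      + carleman_integral (-\<xi>) d lam (u j (s - 1)) + carleman_integral (-\<xi>) d lam (u j (s + 1))
      + 4 * carleman_integral (-\<xi>) d lam (u j s))" (is "_ \<le> _ + 16 / h ^ 4 * ?S")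
proof -
  have idx: "j \<in> {1..N}" "s \<in> {1..N}" "j - 1 \<in> {1..N}" "j + 1 \<in> {1..N}" "s - 1 \<in> {1..N}" "s + 1 \<in> {1..N}"
    using ij unfolding grid_interior_def by auto
  have cont: "continuous_on {-\<xi>..d} (u k l)" if "k \<in> {1..N}" "l \<in> {1..N}" for k l
    using H2_on_continuous[OF in_H0_2hD(1)[OF H0 that] le] .
  note H2 = in_H0_2hD(1)[OF H0 idx(1,2)]
  define c where "c z = (u (j - 1) s z + u (j + 1) s z + u j (s - 1) z + u j (s + 1) z - 4 * u j s z) / of_real (h\<^sup>2)" for z
  have lap: "lap_h h u uzz j s = (\<lambda>z. uzz j s z + c z)"
    by (simp add: lap_h_eq c_def fun_eq_iff)
  have "carleman_integral (-\<xi>) d lam (uzz j s)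
      \<le> 2 * carleman_integral (-\<xi>) d lam (\<lambda>z. uzz j s z + c z) + 2 * carleman_integral (-\<xi>) d lam c"
    using H2_on_second_measurable[OF H2 le] H2_on_second_square_integrable[OF H2 le]
    by (rule carleman_integral_le_add) (unfold c_def divide_inverse, intro continuous_intros cont idx)
  then have "carleman_integral (-\<xi>) d lam (uzz j s)
      \<le> 2 * carleman_integral (-\<xi>) d lam (lap_h h u uzz j s) + 2 * carleman_integral (-\<xi>) d lam c"
    unfolding lap .
  moreover have "carleman_integral (-\<xi>) d lam c \<le> 8 / h ^ 4 * ?S"
    unfolding c_def using idx by (intro carleman_integral_five_point_le cont)
  moreover have "2 * (8 / h ^ 4 * ?S) = 16 / h ^ 4 * ?S"
    by simp
  ultimately show ?thesis by linarith
qed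

lemma B_h_lower_bound:
  assumes H0: "in_H0_2h \<xi> d N u uz uzz" and lt: "-\<xi> < d"
  shows "wsum \<xi> d h N (\<lambda>j s. True) lam uzz / 2 - 64 / h ^ 4 * wsum \<xi> d h N (\<lambda>j s. True) lam u
    \<le> B_h \<xi> d h N lam u uzz"
proof -
  let ?CI = "carleman_integral (-\<xi>) d lam"
  let ?I = "{(j, s). grid_interior N j s}" and ?G = "{1..N} \<times> {1..N}"
  define F where "F j s = h\<^sup>2 * ?CI (u j s)" for j s
  define nb where "nb j s = F (j - 1) s + F (j + 1) s + F j (s - 1) + F j (s + 1) + 4 * F j s" for j s
  have point: "h\<^sup>2 * ?CI (uzz j s) / 2 - 8 / h ^ 4 * nb j s \<le> h\<^sup>2 * ?CI (lap_h h u uzz j s)"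
    if "grid_interior N j s" for j s
    using mult_left_mono[OF carleman_integral_second_le_lap_h[OF H0 _ that, of lam h] zero_le_power2[of h]] lt
    unfolding nb_def F_def by (simp add: algebra_simps)
  have interior: "{(j, s) \<in> ?G. grid_interior N j s} = ?I"
    by (auto simp: grid_interior_def)
  have "wsum \<xi> d h N (\<lambda>j s. True) lam uzz = wsum \<xi> d h N (grid_interior N) lam uzz"
    by (rule wsum_second_interior_eq[OF H0 lt, symmetric])
  also have "\<dots> = (\<Sum>(j, s)\<in>?I. h\<^sup>2 * ?CI (uzz j s))"
    unfolding wsum_eq_sum interior ..
  moreover have "wsum \<xi> d h N (\<lambda>j s. True) lam u = (\<Sum>(j, s)\<in>?G. F j s)"
    unfolding wsum_eq_sum F_def by (rule sum.cong) auto
  ultimately have "wsum \<xi> d h N (\<lambda>j s. True) lam uzz / 2 - 64 / h ^ 4 * wsum \<xi> d h N (\<lambda>j s. True) lam u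
      = (\<Sum>(j, s)\<in>?I. h\<^sup>2 * ?CI (uzz j s)) / 2 - 8 / h ^ 4 * (8 * (\<Sum>(j, s)\<in>?G. F j s))"
    by simp
  also have "\<dots> \<le> (\<Sum>(j, s)\<in>?I. h\<^sup>2 * ?CI (uzz j s)) / 2 - 8 / h ^ 4 * (\<Sum>(j, s)\<in>?I. nb j s)"
    using grid_neighbour_sum_le[of F N] unfolding nb_def
    by (intro diff_left_mono mult_left_mono) (auto simp: F_def carleman_integral_nonneg)
  also have "\<dots> = (\<Sum>(j, s)\<in>?I. h\<^sup>2 * ?CI (uzz j s) / 2 - 8 / h ^ 4 * nb j s)"
    by (simp add: sum_subtractf sum_divide_distrib sum_distrib_left case_prod_beta)
  also have "\<dots> \<le> (\<Sum>(j, s)\<in>?I. h\<^sup>2 * ?CI (lap_h h u uzz j s))"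
    using point by (intro sum_mono) (simp add: case_prod_beta)
  also have "\<dots> = B_h \<xi> d h N lam u uzz"
    unfolding B_h_def wsum_eq_sum interior ..
  finally show ?thesis .
qed

lemma carleman_estimate_explicit:
  assumes H0: "in_H0_2h \<xi> d N u uz uzz" and lt: "-\<xi> < d" and lam: "0 < lam"
    and large: "128 * (d + \<xi>) / h ^ 4 \<le> lam ^ 3"
  shows "wsum \<xi> d h N (\<lambda>j s. True) lam uzz + lam * wsum \<xi> d h N (\<lambda>j s. True) lam uz
      + lam ^ 3 * wsum \<xi> d h N (\<lambda>j s. True) lam u \<le> 4 * (1 + (d + \<xi>)) * B_h \<xi> d h N lam u uzz"
proof -
  define L where "L = d + \<xi>"
  define W where "W f = wsum \<xi> d h N (\<lambda>j s. True) lam f" for f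
  have L: "0 < L" using lt by (simp add: L_def)
  have W1: "lam * W uz \<le> L / 2 * W uzz"
    unfolding W_def L_def using lt lam by (intro wsum_first_le_second[OF H0]) auto
  have W0: "lam ^ 3 * W u \<le> L / 2 * W uzz"
    unfolding W_def L_def using lt lam by (intro wsum_le_second[OF H0]) auto
  have "128 * L / h ^ 4 * W u \<le> lam ^ 3 * W u"
    using large unfolding W_def L_def by (intro mult_right_mono wsum_nonneg)
  then have "2 * L * (64 / h ^ 4 * W u) \<le> 2 * L * (W uzz / 4)"
    using W0 by simp
  then have "64 / h ^ 4 * W u \<le> W uzz / 4"
    by (rule mult_left_le_imp_le) (use L in simp)
  then have B: "W uzz \<le> 4 * B_h \<xi> d h N lam u uzz"
    using B_h_lower_bound[OF H0 lt, of h lam] unfolding W_def by linarith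
  have "W uzz + lam * W uz + lam ^ 3 * W u \<le> W uzz + L / 2 * W uzz + L / 2 * W uzz"
    using W1 W0 by linarith
  also have "\<dots> = (1 + L) * W uzz"
    by (simp add: algebra_simps)
  also have "\<dots> \<le> (1 + L) * (4 * B_h \<xi> d h N lam u uzz)"
    using B L by (intro mult_left_mono) auto
  finally show ?thesis
    unfolding W_def L_def by (simp add: algebra_simps)
qed

theorem theorem7p1:
  fixes \<xi> d h :: real
  assumes "\<xi> > 0" and "d > 0" and "h > 0"
  shows "\<exists>lam0 C. lam0 > 1 \<and> C > 0 \<and>
    (\<forall>(b::real) (N::nat) (lam::real) u uz uzz.
       b > 0 \<and> real (N - 1) * h = 2 * b \<and> lam \<ge> lam0 \<and> in_H0_2h \<xi> d N u uz uzz \<longrightarrow>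
       B_h \<xi> d h N lam u uzz \<ge>
         C * wsum \<xi> d h N (\<lambda>j s. True) lam uzz
         + C * lam * wsum \<xi> d h N (\<lambda>j s. True) lam uz
         + C * lam ^ 3 * wsum \<xi> d h N (\<lambda>j s. True) lam u)"
proof -
  define lam0 where "lam0 = 1 + 128 * (d + \<xi>) / h ^ 4"
  define C where "C = 1 / (4 * (1 + (d + \<xi>)))"
  have lam0: "1 < lam0" and C: "0 < C"
    using assms by (simp_all add: lam0_def C_def)
  have "C * wsum \<xi> d h N (\<lambda>j s. True) lam uzz + C * lam * wsum \<xi> d h N (\<lambda>j s. True) lam uz
      + C * lam ^ 3 * wsum \<xi> d h N (\<lambda>j s. True) lam u \<le> B_h \<xi> d h N lam u uzz"
    if lam: "lam0 \<le> lam" and H0: "in_H0_2h \<xi> d N u uz uzz" for N lam u uz uzz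
  proof -
    have "128 * (d + \<xi>) / h ^ 4 \<le> lam"
      using lam unfolding lam0_def by simp
    also have "\<dots> \<le> lam ^ 3"
      using power_increasing[of 1 3 lam] lam lam0 by simp
    finally have "wsum \<xi> d h N (\<lambda>j s. True) lam uzz + lam * wsum \<xi> d h N (\<lambda>j s. True) lam uz
        + lam ^ 3 * wsum \<xi> d h N (\<lambda>j s. True) lam u \<le> 4 * (1 + (d + \<xi>)) * B_h \<xi> d h N lam u uzz"
      using assms lam lam0 by (intro carleman_estimate_explicit[OF H0]) auto
    from mult_left_mono[OF this less_imp_le[OF C]]
    have "C * (wsum \<xi> d h N (\<lambda>j s. True) lam uzz + lam * wsum \<xi> d h N (\<lambda>j s. True) lam uz
        + lam ^ 3 * wsum \<xi> d h N (\<lambda>j s. True) lam u) \<le> C * (4 * (1 + (d + \<xi>))) * B_h \<xi> d h N lam u uzz"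
      by (simp add: mult.assoc)
    also have "C * (4 * (1 + (d + \<xi>))) = 1"
      using assms by (simp add: C_def)
    finally show ?thesis
      by (simp add: algebra_simps)
  qed
  then show ?thesis
    using lam0 C by blast
qed

end
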